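(* Assume the setting in the context. (a) Assume Conditions (MM), (GG), (JS-cts) and (JD-jump). Suppose that for every $f\in\mathcal{D}_{\mathcal{X}}$ there exist $u_+\in\mathcal{X}^{\mathcal{U}}$ and $u_-\in\mathcal{X}^{\mathcal{V}}$ with $(\widehat Lu_+)|_{\mathcal{U}}=(\widehat Lu_-)|_{\mathcal{V}}=0$ and $\widetilde{\operatorname{Tr}}^{\mathcal{U}}_{\mathcal{X}}u_+=\widetilde{\operatorname{Tr}}^{\mathcal{V}}_{\mathcal{X}}u_-=f$. Then $\widetilde{\operatorname{Tr}}^{\mathcal{U}}_{\mathcal{X}}\widehat{\mathbf{S}}^L_{\mathcal{U}}:\mathcal{N}_{\mathcal{X}}\to\mathcal{D}_{\mathcal{X}}$ is onto. If moreover there is $C_0<\infty$ such that for every $f\in\mathcal{D}_{\mathcal{X}}$ such a pair can be chosen with $\|u_+\|_{\mathcal{X}^{\mathcal{U}}}\le C_0\|f\|_{\mathcal{D}_{\mathcal{X}}}$ and $\|u_-\|_{\mathcal{X}^{\mathcal{V}}}\le C_0\|f\|_{\mathcal{D}_{\mathcal{X}}}$, then there is $C_1$ such that every $f\in\mathcal{D}_{\mathcal{X}}$ equals $\widetilde{\operatorname{Tr}}^{\mathcal{U}}_{\mathcal{X}}\widehat{\mathbf{S}}^L_{\mathcal{U}}g$ for some $g\in\mathcal{N}_{\mathcal{X}}$ with $\|g\|_{\mathcal{N}_{\mathcal{X}}}\le C_1\|f\|_{\mathcal{D}_{\mathcal{X}}}$. (b) Assume Conditions (TT), (GG), (JD-cts)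 and (JS-jump). Suppose that for every $g\in\mathcal{N}_{\mathcal{X}}$ there exist $u_+\in\mathcal{X}^{\mathcal{U}}$ and $u_-\in\mathcal{X}^{\mathcal{V}}$ with $(\widehat Lu_+)|_{\mathcal{U}}=(\widehat Lu_-)|_{\mathcal{V}}=0$ and $\widehat{\mathbf{M}}^{\mathcal{U}}_Bu_+=\widehat{\mathbf{M}}^{\mathcal{V}}_Bu_-=g$. Then $\widehat{\mathbf{M}}^{\mathcal{U}}_B\widehat{\mathbf{D}}^B_{\mathcal{U}}:\mathcal{D}_{\mathcal{X}}\to\mathcal{N}_{\mathcal{X}}$ is onto. If moreover there is $C_0<\infty$ such that for every $g\in\mathcal{N}_{\mathcal{X}}$ such a pair can be chosen with $\|u_+\|_{\mathcal{X}^{\mathcal{U}}}\le C_0\|g\|_{\mathcal{N}_{\mathcal{X}}}$ and $\|u_-\|_{\mathcal{X}^{\mathcal{V}}}\le C_0\|g\|_{\mathcal{N}_{\mathcal{X}}}$, then there is $C_1$ such that every $g\in\mathcal{N}_{\mathcal{X}}$ equals $\widehat{\mathbf{M}}^{\mathcal{U}}_B\widehat{\mathbf{D}}^B_{\mathcal{U}}f$ for some $f\in\mathcal{D}_{\mathcal{X}}$ with $\|f\|_{\mathcal{D}_{\mathcal{X}}}\le C_1\|g\|_{\mathcal{N}_{\mathcal{X}}}$.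
   Context: Let $\mathcal{X}^{\mathcal{U}}$, $\mathcal{X}^{\mathcal{V}}$, $\mathcal{D}_{\mathcal{X}}$, $\mathcal{N}_{\mathcal{X}}$ be quasi-Banach spaces. For $\mathcal{O}\in\{\mathcal{U},\mathcal{V}\}$: let $u\mapsto(\widehat Lu)|_{\mathcal{O}}$ be a linear operator on $\mathcal{X}^{\mathcal{O}}$, let $\mathcal{K}^{\mathcal{O}}=\{u\in\mathcal{X}^{\mathcal{O}}:(\widehat Lu)|_{\mathcal{O}}=0\}$, and let $\widetilde{\operatorname{Tr}}^{\mathcal{O}}_{\mathcal{X}}:\mathcal{K}^{\mathcal{O}}\to\mathcal{D}_{\mathcal{X}}$, $\widehat{\mathbf{M}}^{\mathcal{O}}_B:\mathcal{K}^{\mathcal{O}}\to\mathcal{N}_{\mathcal{X}}$, $\widehat{\mathbf{D}}^B_{\mathcal{O}}:\mathcal{D}_{\mathcal{X}}\to\mathcal{X}^{\mathcal{O}}$, $\widehat{\mathbf{S}}^L_{\mathcal{O}}:\mathcal{N}_{\mathcal{X}}\to\mathcal{X}^{\mathcal{O}}$ be linear operators. For $\mathcal{O}\in\{\mathcal U,\mathcal V\}$ consider: (T)$_{\mathcal{O}}$ $\widetilde{\operatorname{Tr}}^{\mathcal{O}}_{\mathcal{X}}$ is bounded $\mathcal{K}^{\mathcal{O}}\to\mathcal{D}_{\mathcal{X}}$; (M)$_{\mathcal{O}}$ $\widehat{\mathbf{M}}^{\mathcal{O}}_B$ is bounded $\mathcal{K}^{\mathcal{O}}\to\mathcal{N}_{\mathcal{X}}$;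 (G)$_{\mathcal{O}}$ every $u\in\mathcal{K}^{\mathcal{O}}$ satisfies $u=-\widehat{\mathbf{D}}^B_{\mathcal{O}}(\widetilde{\operatorname{Tr}}^{\mathcal{O}}_{\mathcal{X}}u)+\widehat{\mathbf{S}}^L_{\mathcal{O}}(\widehat{\mathbf{M}}^{\mathcal{O}}_Bu)$. Condition (TT) means (T)$_{\mathcal U}$ and (T)$_{\mathcal V}$ both hold; likewise (MM), (GG). Further conditions (each including that the potentials involved lie in the respective $\mathcal K^{\mathcal O}$, so the expressions are defined): (JS-cts) $\widetilde{\operatorname{Tr}}^{\mathcal{U}}_{\mathcal{X}}(\widehat{\mathbf{S}}^L_{\mathcal{U}}g)-\widetilde{\operatorname{Tr}}^{\mathcal{V}}_{\mathcal{X}}(\widehat{\mathbf{S}}^L_{\mathcal{V}}g)=0$ for all $g\in\mathcal{N}_{\mathcal{X}}$; (JD-cts) $\widehat{\mathbf{M}}^{\mathcal{U}}_B(\widehat{\mathbf{D}}^B_{\mathcal{U}}f)-\widehat{\mathbf{M}}^{\mathcal{V}}_B(\widehat{\mathbf{D}}^B_{\mathcal{V}}f)=0$ for all $f\in\mathcal{D}_{\mathcal{X}}$; (JS-jump) $\widehat{\mathbf{M}}^{\mathcal{U}}_B(\widehat{\mathbf{S}}^L_{\mathcal{U}}g)+\widehat{\mathbf{M}}^{\mathcal{V}}_B(\widehat{\mathbf{S}}^L_{\mathcal{V}}g)=g$ for all $g\in\mathcal{N}_{\mathcal{X}}$; (JD-jump) $\widetilde{\operatorname{Tr}}^{\mathcal{U}}_{\mathcal{X}}(\widehat{\mathbf{D}}^B_{\mathcal{U}}f)+\widetilde{\operatorname{Tr}}^{\mathcal{V}}_{\mathcal{X}}(\widehat{\mathbf{D}}^B_{\mathcal{V}}f)=-f$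 for all $f\in\mathcal{D}_{\mathcal{X}}$. *)

theory Defs
  imports Complex_Main
begin

definition quasi_norm :: "('a::real_vector \<Rightarrow> real) \<Rightarrow> bool" where
  "quasi_norm N \<longleftrightarrow>
     (\<forall>x. 0 \<le> N x) \<and> (\<forall>x. N x = 0 \<longleftrightarrow> x = 0) \<and>
     (\<forall>c x. N (c *\<^sub>R x) = \<bar>c\<bar> * N x) \<and>
     (\<exists>K\<ge>1. \<forall>x y. N (x + y) \<le> K * (N x + N y))"

definition quasi_banach :: "('a::real_vector \<Rightarrow> real) \<Rightarrow> bool" where
  "quasi_banach N \<longleftrightarrow> quasi_norm N \<and>
     (\<forall>s::nat \<Rightarrow> 'a. (\<forall>e>0. \<exists>M. \<forall>m\<ge>M. \<forall>n\<ge>M. N (s m - s n) < e)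
         \<longrightarrow> (\<exists>l. (\<lambda>n. N (s n - l)) \<longlonglongrightarrow> 0))"

definition lin_on_set :: "'a::real_vector set \<Rightarrow> ('a \<Rightarrow> 'b::real_vector) \<Rightarrow> bool" where
  "lin_on_set K f \<longleftrightarrow> (\<forall>x\<in>K. \<forall>y\<in>K. f (x + y) = f x + f y) \<and>
                       (\<forall>c. \<forall>x\<in>K. f (c *\<^sub>R x) = c *\<^sub>R f x)"

definition bounded_on_set ::
  "('a \<Rightarrow> real) \<Rightarrow> ('b \<Rightarrow> real) \<Rightarrow> 'a set \<Rightarrow> ('a \<Rightarrow> 'b) \<Rightarrow> bool" where
  "bounded_on_set Na Nb K T \<longleftrightarrow> (\<exists>C. \<forall>x\<in>K. Nb (T x) \<le> C * Na x)"

end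

theory Submission
  imports Defs
begin

text \<open>Given solutions \<open>u\<^sub>+\<close>, \<open>u\<^sub>-\<close>
on the two sides with the same boundary datum \<open>f\<close>, apply the Green formula to each and take
the boundary data: the single layer jump relation turns the two single layer terms into one
single layer \<open>S(g)\<close> with \<open>g = M u\<^sub>+ + M u\<^sub>-\<close>, and the double layer jump relation collapses
the two double layer terms to \<open>-f\<close>, leaving \<open>f = Tr S(g)\<close>. The bound on \<open>g\<close> comes from the
boundedness of the complementary data map and the quasi-triangle inequality. Part (b) is
part (a) with the roles of Dirichlet and Neumann data exchanged.\<close>

lemma lin_on_set_add: "lin_on_set K T \<Longrightarrow> x \<in> K \<Longrightarrow> y \<in> K \<Longrightarrow> T (x + y) = T x + T y"
  unfolding lin_on_set_def by blast

lemma lin_on_set_minus: "lin_on_set K T \<Longrightarrow> x \<in> K \<Longrightarrow> T (- x) = - T x"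
  unfolding lin_on_set_def by (metis scaleR_minus1_left)

lemma quasi_banach_quasi_norm: "quasi_banach N \<Longrightarrow> quasi_norm N"
  unfolding quasi_banach_def by blast

lemma quasi_norm_nonneg: "quasi_norm N \<Longrightarrow> 0 \<le> N x"
  unfolding quasi_norm_def by blast

lemma quasi_norm_minus: "quasi_norm N \<Longrightarrow> N (- x) = N x"
  unfolding quasi_norm_def by (metis abs_minus_cancel abs_one mult_1 scaleR_minus1_left)

lemma quasi_norm_triangle: "quasi_norm N \<Longrightarrow> \<exists>K\<ge>1. \<forall>x y. N (x + y) \<le> K * (N x + N y)"
  unfolding quasi_norm_def by blast

lemma bounded_on_set_nonneg_const:
  assumes "bounded_on_set Na Nb K T" and "\<And>x. 0 \<le> Na x"
  shows "\<exists>C\<ge>0. \<forall>x\<in>K. Nb (T x) \<le> C * Na x"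
proof -
  obtain C where C: "\<forall>x\<in>K. Nb (T x) \<le> C * Na x"
    using assms(1) unfolding bounded_on_set_def by blast
  have "C * Na x \<le> max C 0 * Na x" for x
    using assms(2) by (intro mult_right_mono) auto
  with C have "\<forall>x\<in>K. Nb (T x) \<le> max C 0 * Na x"
    using order_trans by blast
  then show ?thesis
    by (intro exI[of _ "max C 0"]) simp
qed

lemma bounded_on_set_minus:
  "quasi_norm Nb \<Longrightarrow> bounded_on_set Na Nb K T \<Longrightarrow> bounded_on_set Na Nb K (\<lambda>x. - T x)"
  unfolding bounded_on_set_def by (simp add: quasi_norm_minus)

lemma bounded_on_set_add:
  assumes "quasi_norm N"
    and "bounded_on_set Nx N KX T" "\<And>x. 0 \<le> Nx x"
    and "bounded_on_set Ny N KY S" "\<And>y. 0 \<le> Ny y"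
  shows "\<exists>C\<ge>0. \<forall>x\<in>KX. \<forall>y\<in>KY. N (T x + S y) \<le> C * (Nx x + Ny y)"
proof -
  obtain K where K: "K \<ge> 1" "\<And>a b. N (a + b) \<le> K * (N a + N b)"
    using quasi_norm_triangle[OF assms(1)] by blast
  obtain cT where cT: "cT \<ge> 0" "\<forall>x\<in>KX. N (T x) \<le> cT * Nx x"
    using bounded_on_set_nonneg_const[OF assms(2,3)] by blast
  obtain cS where cS: "cS \<ge> 0" "\<forall>y\<in>KY. N (S y) \<le> cS * Ny y"
    using bounded_on_set_nonneg_const[OF assms(4,5)] by blast
  have "N (T x + S y) \<le> (K * max cT cS) * (Nx x + Ny y)" if "x \<in> KX" "y \<in> KY" for x y
  proof -
    have "N (T x + S y) \<le> K * (N (T x) + N (S y))"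
      by (rule K(2))
    also have "\<dots> \<le> K * (cT * Nx x + cS * Ny y)"
      using K(1) cT(2) cS(2) that by (intro mult_left_mono add_mono) auto
    also have "\<dots> \<le> K * (max cT cS * Nx x + max cT cS * Ny y)"
      using K(1) assms(3,5) by (intro mult_left_mono add_mono mult_right_mono) auto
    finally show ?thesis
      by (simp add: algebra_simps)
  qed
  moreover have "K * max cT cS \<ge> 0"
    using K(1) cT(1) by simp
  ultimately show ?thesis
    by blast
qed

text \<open>\<open>KU\<close>, \<open>KV\<close> are the solution spaces on the two sides of the interface, \<open>A\<close> and \<open>B\<close>
the two kinds of boundary data and \<open>P\<close>, \<open>Q\<close> the potentials of the Green formula. Part (a) of
the theorem is the instance \<open>A = Tr\<close>, \<open>B = M\<close>, \<open>P = D\<close>, \<open>Q = S\<close>; part (b) is the instance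
\<open>A = M\<close>, \<open>B = -Tr\<close>, \<open>P = -S\<close>, \<open>Q = D\<close>, where the signs of the Green formula are moved
into the data and the potentials.\<close>

locale transmission_potentials =
  fixes KU :: "'xu::real_vector set" and KV :: "'xv::real_vector set"
    and AU :: "'xu \<Rightarrow> 'a::real_vector" and AV :: "'xv \<Rightarrow> 'a"
    and BU :: "'xu \<Rightarrow> 'b::real_vector" and BV :: "'xv \<Rightarrow> 'b"
    and PU :: "'a \<Rightarrow> 'xu" and PV :: "'a \<Rightarrow> 'xv"
    and QU :: "'b \<Rightarrow> 'xu" and QV :: "'b \<Rightarrow> 'xv"
  assumes subspace_KU: "subspace KU" and subspace_KV: "subspace KV"
    and lin_AU: "lin_on_set KU AU" and lin_AV: "lin_on_set KV AV"
    and linear_QU: "linear QU"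
    and PU_in: "PU f \<in> KU" and PV_in: "PV f \<in> KV"
    and QU_in: "QU g \<in> KU" and QV_in: "QV g \<in> KV"
    and green_U: "u \<in> KU \<Longrightarrow> u = - PU (AU u) + QU (BU u)"
    and green_V: "v \<in> KV \<Longrightarrow> v = - PV (AV v) + QV (BV v)"
    and jump_Q: "AU (QU g) = AV (QV g)"
    and jump_P: "AU (PU f) + AV (PV f) = - f"
begin

lemma green_U_data:
  assumes "u \<in> KU"
  shows "AU u = - AU (PU (AU u)) + AU (QU (BU u))"
proof -
  have "AU u = AU (- PU (AU u) + QU (BU u))"
    using green_U[OF assms] by (rule arg_cong)
  also have "\<dots> = - AU (PU (AU u)) + AU (QU (BU u))"
    by (simp only: lin_on_set_add[OF lin_AU subspace_neg[OF subspace_KU PU_in] QU_in]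
        lin_on_set_minus[OF lin_AU PU_in])
  finally show ?thesis .
qed

lemma green_V_data:
  assumes "v \<in> KV"
  shows "AV v = - AV (PV (AV v)) + AV (QV (BV v))"
proof -
  have "AV v = AV (- PV (AV v) + QV (BV v))"
    using green_V[OF assms] by (rule arg_cong)
  also have "\<dots> = - AV (PV (AV v)) + AV (QV (BV v))"
    by (simp only: lin_on_set_add[OF lin_AV subspace_neg[OF subspace_KV PV_in] QV_in]
        lin_on_set_minus[OF lin_AV PV_in])
  finally show ?thesis .
qed

lemma data_eq_single_layer:
  assumes "u \<in> KU" "v \<in> KV" "AU u = f" "AV v = f"
  shows "AU (QU (BU u + BV v)) = f"
proof -
  have collapse: "q + q' = w" if "w = - p + q" "w = - p' + q'" "p + p' = - w" for w p p' q q' :: 'a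
    using that by (metis add.assoc add.commute add_uminus_conv_diff diff_add_cancel minus_add_cancel)
  have "AU (QU (BU u + BV v)) = AU (QU (BU u) + QU (BV v))"
    by (simp add: linear_add[OF linear_QU])
  also have "\<dots> = AU (QU (BU u)) + AU (QU (BV v))"
    by (rule lin_on_set_add[OF lin_AU QU_in QU_in])
  also have "\<dots> = AU (QU (BU u)) + AV (QV (BV v))"
    by (subst jump_Q[of "BV v"]) (rule refl)
  also have "\<dots> = f"
    using green_U_data[OF assms(1)] green_V_data[OF assms(2)] jump_P[of f]
    unfolding assms(3,4) by (rule collapse)
  finally show ?thesis .
qed

lemma single_layer_data_surj:
  assumes "\<forall>f. \<exists>u v. u \<in> KU \<and> v \<in> KV \<and> AU u = f \<and> AV v = f"
  shows "\<forall>f. \<exists>g. AU (QU g) = f"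
  using assms data_eq_single_layer by blast

lemma single_layer_data_surj_bounded:
  assumes nN: "quasi_norm nN" and nU: "quasi_norm nU" and nV: "quasi_norm nV"
    and bounded_BU: "bounded_on_set nU nN KU BU" and bounded_BV: "bounded_on_set nV nN KV BV"
    and solvable: "\<forall>f. \<exists>u v. u \<in> KU \<and> v \<in> KV \<and> AU u = f \<and> AV v = f
                            \<and> nU u \<le> C0 * nA f \<and> nV v \<le> C0 * nA f"
  shows "\<exists>C1. \<forall>f. \<exists>g. f = AU (QU g) \<and> nN g \<le> C1 * nA f"
proof -
  have "\<And>x. 0 \<le> nU x" "\<And>x. 0 \<le> nV x"
    using nU nV by (simp_all add: quasi_norm_nonneg)
  then obtain C where C: "C \<ge> 0" "\<forall>u\<in>KU. \<forall>v\<in>KV. nN (BU u + BV v) \<le> C * (nU u + nV v)"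
    using bounded_on_set_add[OF nN bounded_BU _ bounded_BV] by blast
  have "\<exists>g. f = AU (QU g) \<and> nN g \<le> (2 * C * C0) * nA f" for f
  proof -
    obtain u v where uv: "u \<in> KU" "v \<in> KV" "AU u = f" "AV v = f"
      "nU u \<le> C0 * nA f" "nV v \<le> C0 * nA f"
      using solvable by blast
    have "nN (BU u + BV v) \<le> C * (nU u + nV v)"
      using C(2) uv(1,2) by blast
    also have "\<dots> \<le> C * (C0 * nA f + C0 * nA f)"
      using C(1) uv(5,6) by (intro mult_left_mono add_mono) auto
    also have "\<dots> = (2 * C * C0) * nA f"
      by (simp add: algebra_simps)
    finally show ?thesis
      using data_eq_single_layer[OF uv(1-4)] by blast
  qed
  then show ?thesis
    by blast
qed

end

lemma trace_single_layer_onto: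
  assumes "subspace KU" "subspace KV" "lin_on_set KU TrU" "lin_on_set KV TrV" "linear SU"
    and qnN: "quasi_norm nN" and qnU: "quasi_norm nU" and qnV: "quasi_norm nV"
    and bounded_MU: "bounded_on_set nU nN KU MU" and bounded_MV: "bounded_on_set nV nN KV MV"
    and "\<forall>u\<in>KU. u = - DU (TrU u) + SU (MU u)" "\<forall>u\<in>KV. u = - DV (TrV u) + SV (MV u)"
    and "\<forall>g. SU g \<in> KU \<and> SV g \<in> KV \<and> TrU (SU g) - TrV (SV g) = 0"
    and "\<forall>f. DU f \<in> KU \<and> DV f \<in> KV \<and> TrU (DU f) + TrV (DV f) = - f"
    and solvable: "\<forall>f. \<exists>up um. up \<in> KU \<and> um \<in> KV \<and> TrU up = f \<and> TrV um = f"
  shows "(\<forall>f. \<exists>g. TrU (SU g) = f)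
       \<and> ((\<exists>C0. \<forall>f. \<exists>up um. up \<in> KU \<and> um \<in> KV \<and> TrU up = f \<and> TrV um = f
                      \<and> nU up \<le> C0 * nD f \<and> nV um \<le> C0 * nD f)
          \<longrightarrow> (\<exists>C1. \<forall>f. \<exists>g. f = TrU (SU g) \<and> nN g \<le> C1 * nD f))"
proof -
  interpret transmission_potentials KU KV TrU TrV MU MV DU DV SU SV
    by (rule transmission_potentials.intro) (use assms in auto)
  show ?thesis
    using single_layer_data_surj[OF solvable]
      single_layer_data_surj_bounded[OF qnN qnU qnV bounded_MU bounded_MV]
    by blast
qed

lemma conormal_double_layer_onto:
  assumes "subspace KU" "subspace KV"
    and lin_MU: "lin_on_set KU MU" and lin_MV: "lin_on_set KV MV"
    and DU: "linear DU" and DV: "linear DV"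
    and qnD: "quasi_norm nD" and qnU: "quasi_norm nU" and qnV: "quasi_norm nV"
    and bounded_TrU: "bounded_on_set nU nD KU TrU" and bounded_TrV: "bounded_on_set nV nD KV TrV"
    and "\<forall>u\<in>KU. u = - DU (TrU u) + SU (MU u)" "\<forall>u\<in>KV. u = - DV (TrV u) + SV (MV u)"
    and "\<forall>f. DU f \<in> KU \<and> DV f \<in> KV \<and> MU (DU f) - MV (DV f) = 0"
    and single_layer: "\<forall>g. SU g \<in> KU \<and> SV g \<in> KV \<and> MU (SU g) + MV (SV g) = g"
    and solvable: "\<forall>g. \<exists>up um. up \<in> KU \<and> um \<in> KV \<and> MU up = g \<and> MV um = g"
  shows "(\<forall>g. \<exists>f. MU (DU f) = g)
       \<and> ((\<exists>C0. \<forall>g. \<exists>up um. up \<in> KU \<and> um \<in> KV \<and> MU up = g \<and> MV um = g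
                      \<and> nU up \<le> C0 * nN g \<and> nV um \<le> C0 * nN g)
          \<longrightarrow> (\<exists>C1. \<forall>g. \<exists>f. g = MU (DU f) \<and> nD f \<le> C1 * nN g))"
proof -
  have "MU (- SU g) + MV (- SV g) = - g" for g
    using single_layer lin_on_set_minus[OF lin_MU] lin_on_set_minus[OF lin_MV]
    by (metis minus_add_distrib)
  then interpret transmission_potentials KU KV MU MV "\<lambda>u. - TrU u" "\<lambda>v. - TrV v"
      "\<lambda>g. - SU g" "\<lambda>g. - SV g" DU DV
    by (intro transmission_potentials.intro)
      (use assms in \<open>auto simp: subspace_neg linear_neg[OF DU] linear_neg[OF DV] add.commute\<close>)
  show ?thesis
    using single_layer_data_surj[OF solvable]
      single_layer_data_surj_bounded[OF qnD qnU qnV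
        bounded_on_set_minus[OF qnD bounded_TrU] bounded_on_set_minus[OF qnD bounded_TrV]]
    by blast
qed

theorem theorem6p4:
  fixes nU :: "'xu::real_vector \<Rightarrow> real" and nV :: "'xv::real_vector \<Rightarrow> real"
    and nD :: "'d::real_vector \<Rightarrow> real" and nN :: "'n::real_vector \<Rightarrow> real"
    and LU :: "'xu \<Rightarrow> 'yu::real_vector" and LV :: "'xv \<Rightarrow> 'yv::real_vector"
    and TrU :: "'xu \<Rightarrow> 'd" and TrV :: "'xv \<Rightarrow> 'd"
    and MU :: "'xu \<Rightarrow> 'n" and MV :: "'xv \<Rightarrow> 'n"
    and DU :: "'d \<Rightarrow> 'xu" and DV :: "'d \<Rightarrow> 'xv"
    and SU :: "'n \<Rightarrow> 'xu" and SV :: "'n \<Rightarrow> 'xv"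
  defines "KU \<equiv> {u. LU u = 0}" and "KV \<equiv> {u. LV u = 0}"
  assumes qbU: "quasi_banach nU" and qbV: "quasi_banach nV"
    and qbD: "quasi_banach nD" and qbN: "quasi_banach nN"
    and linLU: "linear LU" and linLV: "linear LV"
    and linTrU: "lin_on_set KU TrU" and linTrV: "lin_on_set KV TrV"
    and linMU: "lin_on_set KU MU" and linMV: "lin_on_set KV MV"
    and linDU: "linear DU" and linDV: "linear DV"
    and linSU: "linear SU" and linSV: "linear SV"
  shows
  "((bounded_on_set nU nN KU MU \<and> bounded_on_set nV nN KV MV)
     \<and> (\<forall>u\<in>KU. u = - DU (TrU u) + SU (MU u)) \<and> (\<forall>u\<in>KV. u = - DV (TrV u) + SV (MV u))
     \<and> (\<forall>g. SU g \<in> KU \<and> SV g \<in> KV \<and> TrU (SU g) - TrV (SV g) = 0)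
     \<and> (\<forall>f. DU f \<in> KU \<and> DV f \<in> KV \<and> TrU (DU f) + TrV (DV f) = - f)
     \<and> (\<forall>f. \<exists>up um. LU up = 0 \<and> LV um = 0 \<and> TrU up = f \<and> TrV um = f)
   \<longrightarrow> (\<forall>f. \<exists>g. TrU (SU g) = f)
       \<and> ((\<exists>C0. \<forall>f. \<exists>up um. LU up = 0 \<and> LV um = 0 \<and> TrU up = f \<and> TrV um = f
                      \<and> nU up \<le> C0 * nD f \<and> nV um \<le> C0 * nD f)
          \<longrightarrow> (\<exists>C1. \<forall>f. \<exists>g. f = TrU (SU g) \<and> nN g \<le> C1 * nD f)))
   \<and>
   ((bounded_on_set nU nD KU TrU \<and> bounded_on_set nV nD KV TrV)
     \<and> (\<forall>u\<in>KU. u = - DU (TrU u) + SU (MU u)) \<and> (\<forall>u\<in>KV. u = - DV (TrV u) + SV (MV u))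
     \<and> (\<forall>f. DU f \<in> KU \<and> DV f \<in> KV \<and> MU (DU f) - MV (DV f) = 0)
     \<and> (\<forall>g. SU g \<in> KU \<and> SV g \<in> KV \<and> MU (SU g) + MV (SV g) = g)
     \<and> (\<forall>g. \<exists>up um. LU up = 0 \<and> LV um = 0 \<and> MU up = g \<and> MV um = g)
   \<longrightarrow> (\<forall>g. \<exists>f. MU (DU f) = g)
       \<and> ((\<exists>C0. \<forall>g. \<exists>up um. LU up = 0 \<and> LV um = 0 \<and> MU up = g \<and> MV um = g
                      \<and> nU up \<le> C0 * nN g \<and> nV um \<le> C0 * nN g)
          \<longrightarrow> (\<exists>C1. \<forall>g. \<exists>f. g = MU (DU f) \<and> nD f \<le> C1 * nN g)))"
proof -
  have kernels: "subspace KU" "subspace KV"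
    unfolding KU_def KV_def by (simp_all add: linear_subspace_kernel linLU linLV)
  have norms: "quasi_norm nU" "quasi_norm nV" "quasi_norm nD" "quasi_norm nN"
    using qbU qbV qbD qbN by (simp_all add: quasi_banach_quasi_norm)
  show ?thesis
    using trace_single_layer_onto[OF kernels linTrU linTrV linSU norms(4,1,2),
        where MU = MU and MV = MV and DU = DU and DV = DV and SV = SV and nD = nD]
      conormal_double_layer_onto[OF kernels linMU linMV linDU linDV norms(3,1,2),
        where TrU = TrU and TrV = TrV and SU = SU and SV = SV and nN = nN]
    unfolding KU_def KV_def mem_Collect_eq by blast
qed

end
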